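(* Suppose $\sigma$ is not surjective and $f\in D[t;\sigma]$ is monic of degree $m\ge2$ and irreducible. Then $S_f$ has no zero divisors and is a right division algebra but not a left division algebra. In particular, $S_f$ is an infinite-dimensional $S_0$-algebra.
   Context: $D$ is an associative division ring and $\sigma$ a ring endomorphism of $D$. $D[t;\sigma]$ is the skew polynomial ring with $ta=\sigma(a)t$. For monic $f$ of degree $m$, $S_f$ is the set of polynomials of degree $<m$ with multiplication $g\circ h=$ remainder of $gh$ upon right division by $f$. $S_0=\{a\in D: a\circ h=h\circ a \text{ for all } h\in S_f\}$, a commutative ring over which $S_f$ is an algebra. $f$ is irreducible if it is not a unit and has no factorization $f=gh$ with $\deg g,\deg h<\deg f$. $S_f$ is a right (resp. left) division algebra if $R_a(x)=x\circ a$ (resp. $L_a(x)=a\circ x$) is bijective for all nonzero $a$. *)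

theory Defs
  imports "HOL-Computational_Algebra.Polynomial"
begin

text \<open>Skew polynomial ring D[t;sigma] over a division ring D (type 'a), with t a = sigma(a) t.
  Elements are represented by their coefficient sequences ('a poly, used only as a
  container of coefficients); multiplication is the skew product below.\<close>

definition ring_endo :: "('a::division_ring \<Rightarrow> 'a) \<Rightarrow> bool" where
  "ring_endo \<sigma> \<longleftrightarrow> (\<forall>a b. \<sigma> (a + b) = \<sigma> a + \<sigma> b) \<and>
                     (\<forall>a b. \<sigma> (a * b) = \<sigma> a * \<sigma> b) \<and> \<sigma> 1 = 1"

definition skew_mult :: "('a::division_ring \<Rightarrow> 'a) \<Rightarrow> 'a poly \<Rightarrow> 'a poly \<Rightarrow> 'a poly" where
  "skew_mult \<sigma> p q = Poly (map (\<lambda>k. \<Sum>i\<le>k. coeff p i * (\<sigma> ^^ i) (coeff q (k - i)))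
                              [0..<degree p + degree q + 1])"

definition skew_unit :: "('a::division_ring \<Rightarrow> 'a) \<Rightarrow> 'a poly \<Rightarrow> bool" where
  "skew_unit \<sigma> f \<longleftrightarrow> (\<exists>g. skew_mult \<sigma> g f = [:1:] \<and> skew_mult \<sigma> f g = [:1:])"

definition skew_irreducible :: "('a::division_ring \<Rightarrow> 'a) \<Rightarrow> 'a poly \<Rightarrow> bool" where
  "skew_irreducible \<sigma> f \<longleftrightarrow> \<not> skew_unit \<sigma> f \<and>
     \<not> (\<exists>g h. degree g < degree f \<and> degree h < degree f \<and> f = skew_mult \<sigma> g h)"

definition skew_rmod :: "('a::division_ring \<Rightarrow> 'a) \<Rightarrow> 'a poly \<Rightarrow> 'a poly \<Rightarrow> 'a poly" where
  "skew_rmod \<sigma> g f = (THE r. degree r < degree f \<and> (\<exists>q. g = skew_mult \<sigma> q f + r))"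

definition Sf :: "'a::division_ring poly \<Rightarrow> 'a poly set" where
  "Sf f = {g. degree g < degree f}"

definition Sf_mult :: "('a::division_ring \<Rightarrow> 'a) \<Rightarrow> 'a poly \<Rightarrow> 'a poly \<Rightarrow> 'a poly \<Rightarrow> 'a poly" where
  "Sf_mult \<sigma> f g h = skew_rmod \<sigma> (skew_mult \<sigma> g h) f"

definition S0 :: "('a::division_ring \<Rightarrow> 'a) \<Rightarrow> 'a poly \<Rightarrow> 'a set" where
  "S0 \<sigma> f = {a. \<forall>h\<in>Sf f. Sf_mult \<sigma> f [:a:] h = Sf_mult \<sigma> f h [:a:]}"

definition Sf_no_zero_divisors :: "('a::division_ring \<Rightarrow> 'a) \<Rightarrow> 'a poly \<Rightarrow> bool" where
  "Sf_no_zero_divisors \<sigma> f \<longleftrightarrow>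
     (\<forall>g\<in>Sf f. \<forall>h\<in>Sf f. g \<noteq> 0 \<longrightarrow> h \<noteq> 0 \<longrightarrow> Sf_mult \<sigma> f g h \<noteq> 0)"

definition Sf_right_division :: "('a::division_ring \<Rightarrow> 'a) \<Rightarrow> 'a poly \<Rightarrow> bool" where
  "Sf_right_division \<sigma> f \<longleftrightarrow>
     (\<forall>a\<in>Sf f. a \<noteq> 0 \<longrightarrow> bij_betw (\<lambda>x. Sf_mult \<sigma> f x a) (Sf f) (Sf f))"

definition Sf_left_division :: "('a::division_ring \<Rightarrow> 'a) \<Rightarrow> 'a poly \<Rightarrow> bool" where
  "Sf_left_division \<sigma> f \<longleftrightarrow>
     (\<forall>a\<in>Sf f. a \<noteq> 0 \<longrightarrow> bij_betw (\<lambda>x. Sf_mult \<sigma> f a x) (Sf f) (Sf f))"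

definition Sf_finite_dim_over_S0 :: "('a::division_ring \<Rightarrow> 'a) \<Rightarrow> 'a poly \<Rightarrow> bool" where
  "Sf_finite_dim_over_S0 \<sigma> f \<longleftrightarrow>
     (\<exists>B. finite B \<and> B \<subseteq> Sf f \<and>
        (\<forall>g\<in>Sf f. \<exists>c. (\<forall>b\<in>B. c b \<in> S0 \<sigma> f) \<and>
                        g = (\<Sum>b\<in>B. Sf_mult \<sigma> f [:c b:] b)))"

end

theory Submission
  imports Defs
begin

text \<open>
  Right division by \<open>f\<close> works in \<open>D[t;\<sigma>]\<close>, so \<open>S\<^sub>f\<close> is an \<open>m\<close>-dimensional left
  \<open>D\<close>-vector space on which each \<open>R\<^sub>a\<close> is left \<open>D\<close>-linear. A relation \<open>x a \<in> D[t;\<sigma>] f\<close>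
  with \<open>x, a \<noteq> 0\<close> of degree \<open>< m\<close> can be pushed down the Euclidean algorithm for \<open>a\<close> and
  \<open>f\<close>, using the left Ore condition, until \<open>f\<close> acquires a right factor of degree strictly
  between \<open>0\<close> and \<open>m\<close>; so irreducibility rules out zero divisors, every \<open>R\<^sub>a\<close> is injective,
  and hence bijective by counting dimensions.

  If \<open>c \<notin> \<sigma>(D)\<close>, then \<open>c t \<noteq> t \<circ> x\<close> for all \<open>x\<close>: in \<open>t x = q f + c t\<close> the quotient \<open>q\<close> is
  constant by degrees and zero by comparing constant terms (\<open>f(0) \<noteq> 0\<close> by irreducibility),
  so \<open>c = \<sigma>(x\<^sub>0) \<in> \<sigma>(D)\<close>. Finally \<open>c \<circ> t = t \<circ> c\<close> forces \<open>\<sigma>(c) = c\<close>,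
  so \<open>S\<^sub>0\<close> lies in the fixed division ring of \<open>\<sigma>\<close>, over which the constants \<open>c, \<sigma>(c), \<sigma>\<^sup>2(c), \<dots>\<close>
  are linearly independent.
\<close>

lemma sum_eq_single:
  assumes "finite A" "a \<in> A" "\<And>i. i \<in> A \<Longrightarrow> i \<noteq> a \<Longrightarrow> g i = 0"
  shows "sum g A = g a"
  using assms by (simp add: sum.remove[of A a] sum.neutral)

section \<open>Ring endomorphisms of a division ring\<close>

context
  fixes \<tau> :: "'a::division_ring \<Rightarrow> 'a"
  assumes endo: "ring_endo \<tau>"
begin

lemma ring_endo_add: "\<tau> (a + b) = \<tau> a + \<tau> b"
  and ring_endo_mult: "\<tau> (a * b) = \<tau> a * \<tau> b"
  and ring_endo_one: "\<tau> 1 = 1"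
  using endo unfolding ring_endo_def by blast+

lemma ring_endo_zero: "\<tau> 0 = 0"
  using ring_endo_add[of 0 0] by simp

lemma ring_endo_uminus: "\<tau> (- a) = - \<tau> a"
  using ring_endo_add[of a "- a"] by (simp add: ring_endo_zero add_eq_0_iff)

lemma ring_endo_diff: "\<tau> (a - b) = \<tau> a - \<tau> b"
  using ring_endo_add[of a "- b"] by (simp add: ring_endo_uminus)

lemma ring_endo_eq_0_iff: "\<tau> a = 0 \<longleftrightarrow> a = 0"
proof
  assume "\<tau> a = 0"
  show "a = 0"
  proof (rule ccontr)
    assume "a \<noteq> 0"
    then have "\<tau> a * \<tau> (inverse a) = 1"
      by (simp add: ring_endo_mult[symmetric] ring_endo_one)
    with \<open>\<tau> a = 0\<close> show False by simp
  qed
qed (simp add: ring_endo_zero)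

lemma ring_endo_inverse: "\<tau> (inverse a) = inverse (\<tau> a)"
proof (cases "a = 0")
  case False
  then have "\<tau> a * \<tau> (inverse a) = 1"
    by (simp add: ring_endo_mult[symmetric] ring_endo_one)
  then show ?thesis by (metis inverse_unique)
qed (simp add: ring_endo_zero)

lemma ring_endo_sum: "\<tau> (\<Sum>i\<in>A. g i) = (\<Sum>i\<in>A. \<tau> (g i))"
  by (induction A rule: infinite_finite_induct) (auto simp: ring_endo_zero ring_endo_add)

lemma ring_endo_funpow: "ring_endo (\<tau> ^^ n)"
  by (induction n) (use endo in \<open>auto simp: ring_endo_def\<close>)

end

section \<open>Left linear algebra over a division ring\<close>

text \<open>\<^const>\<open>smult\<close> needs a commutative ring; over a division ring the polynomials form
  a left vector space under this action.\<close>
definition lsmult :: "'a::division_ring \<Rightarrow> 'a poly \<Rightarrow> 'a poly" where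
  "lsmult c p = map_poly ((*) c) p"

lemma coeff_lsmult [simp]: "coeff (lsmult c p) n = c * coeff p n"
  unfolding lsmult_def by (simp add: coeff_map_poly)

lemma lsmult_add_right: "lsmult c (p + q) = lsmult c p + lsmult c q"
  by (rule poly_eqI) (simp add: distrib_left)

lemma lsmult_diff_right: "lsmult c (p - q) = lsmult c p - lsmult c q"
  by (rule poly_eqI) (simp add: right_diff_distrib)

lemma lsmult_uminus_right: "lsmult c (- p) = - lsmult c p"
  by (rule poly_eqI) simp

lemma lsmult_diff_left: "lsmult (c - d) p = lsmult c p - lsmult d p"
  by (rule poly_eqI) (simp add: left_diff_distrib)

lemma lsmult_uminus_left: "lsmult (- c) p = - lsmult c p"
  by (rule poly_eqI) simp

lemma lsmult_lsmult: "lsmult c (lsmult d p) = lsmult (c * d) p"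
  by (rule poly_eqI) (simp add: mult.assoc)

lemma lsmult_one [simp]: "lsmult 1 p = p"
  and lsmult_0_right [simp]: "lsmult c 0 = 0"
  and lsmult_0_left [simp]: "lsmult 0 p = 0"
  by (rule poly_eqI, simp)+

lemma lsmult_sum_right: "lsmult c (\<Sum>i\<in>A. g i) = (\<Sum>i\<in>A. lsmult c (g i))"
  by (rule poly_eqI) (simp add: coeff_sum sum_distrib_left)

lemma lsmult_sum_left: "lsmult (\<Sum>i\<in>A. g i) p = (\<Sum>i\<in>A. lsmult (g i) p)"
  by (rule poly_eqI) (simp add: coeff_sum sum_distrib_right)

lemma degree_lsmult_le: "degree (lsmult c p) \<le> degree p"
  by (rule degree_le) (simp add: coeff_eq_0)

definition sub_division_ring :: "'a::division_ring set \<Rightarrow> bool" where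
  "sub_division_ring K \<longleftrightarrow>
     1 \<in> K \<and> (\<forall>a\<in>K. \<forall>b\<in>K. a - b \<in> K \<and> a * b \<in> K) \<and> (\<forall>a\<in>K. inverse a \<in> K)"

context
  fixes K :: "'a::division_ring set"
  assumes K: "sub_division_ring K"
begin

lemma sub_division_ring_one: "1 \<in> K"
  and sub_division_ring_diff: "a \<in> K \<Longrightarrow> b \<in> K \<Longrightarrow> a - b \<in> K"
  and sub_division_ring_mult: "a \<in> K \<Longrightarrow> b \<in> K \<Longrightarrow> a * b \<in> K"
  and sub_division_ring_inverse: "a \<in> K \<Longrightarrow> inverse a \<in> K"
  using K unfolding sub_division_ring_def by blast+

lemma sub_division_ring_zero: "0 \<in> K"
  using sub_division_ring_diff[OF sub_division_ring_one sub_division_ring_one] by simp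

lemma sub_division_ring_uminus: "a \<in> K \<Longrightarrow> - a \<in> K"
  using sub_division_ring_diff[OF sub_division_ring_zero] by fastforce

lemma sub_division_ring_add: "a \<in> K \<Longrightarrow> b \<in> K \<Longrightarrow> a + b \<in> K"
  using sub_division_ring_diff[of a "- b"] sub_division_ring_uminus by simp

lemma sub_division_ring_sum: "(\<And>i. i \<in> A \<Longrightarrow> g i \<in> K) \<Longrightarrow> (\<Sum>i\<in>A. g i) \<in> K"
  by (induction A rule: infinite_finite_induct)
    (auto simp: sub_division_ring_zero sub_division_ring_add)

end

lemma sub_division_ring_UNIV: "sub_division_ring UNIV"
  by (simp add: sub_division_ring_def)

definition lspan :: "'a::division_ring set \<Rightarrow> ('i \<Rightarrow> 'a poly) \<Rightarrow> 'i set \<Rightarrow> 'a poly set" where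
  "lspan K v I = {\<Sum>i\<in>I. lsmult (c i) (v i) | c. \<forall>i\<in>I. c i \<in> K}"

lemma lspan_sum_lsmult: "(\<And>i. i \<in> I \<Longrightarrow> c i \<in> K) \<Longrightarrow> (\<Sum>i\<in>I. lsmult (c i) (v i)) \<in> lspan K v I"
  unfolding lspan_def by blast

lemma lspan_insert:
  assumes "finite I" "i0 \<notin> I" "\<And>j. j \<in> J \<Longrightarrow> w j \<in> lspan K v (insert i0 I)"
  shows "\<exists>a r. \<forall>j\<in>J. a j \<in> K \<and> r j \<in> lspan K v I \<and> w j = lsmult (a j) (v i0) + r j"
proof -
  have "\<exists>c q. c \<in> K \<and> q \<in> lspan K v I \<and> w j = lsmult c (v i0) + q" if j: "j \<in> J" for j
  proof -
    obtain c where c: "\<forall>i\<in>insert i0 I. c i \<in> K"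
      and w: "w j = (\<Sum>i\<in>insert i0 I. lsmult (c i) (v i))"
      using assms(3)[OF j] unfolding lspan_def by blast
    have "w j = lsmult (c i0) (v i0) + (\<Sum>i\<in>I. lsmult (c i) (v i))"
      using w assms(1,2) by simp
    moreover have "(\<Sum>i\<in>I. lsmult (c i) (v i)) \<in> lspan K v I"
      using c by (simp add: lspan_sum_lsmult)
    ultimately show ?thesis
      using c by blast
  qed
  then show ?thesis
    by metis
qed

lemma lspan_diff_lsmult:
  assumes K: "sub_division_ring K" and "p \<in> lspan K v I" "q \<in> lspan K v I" "e \<in> K"
  shows "p - lsmult e q \<in> lspan K v I"
proof -
  obtain c d where c: "\<forall>i\<in>I. c i \<in> K" "p = (\<Sum>i\<in>I. lsmult (c i) (v i))"
    and d: "\<forall>i\<in>I. d i \<in> K" "q = (\<Sum>i\<in>I. lsmult (d i) (v i))"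
    using assms(2,3) unfolding lspan_def by blast
  have "p - lsmult e q = (\<Sum>i\<in>I. lsmult (c i - e * d i) (v i))"
    by (simp add: c(2) d(2) lsmult_sum_right lsmult_lsmult lsmult_diff_left sum_subtractf)
  moreover have "c i - e * d i \<in> K" if "i \<in> I" for i
    using c(1) d(1) assms(4) that K sub_division_ring_diff sub_division_ring_mult by blast
  ultimately show ?thesis by (simp add: lspan_sum_lsmult)
qed

definition ldependent :: "'a::division_ring set \<Rightarrow> ('j \<Rightarrow> 'a poly) \<Rightarrow> 'j set \<Rightarrow> bool" where
  "ldependent K w J \<longleftrightarrow>
     (\<exists>l. (\<forall>j\<in>J. l j \<in> K) \<and> (\<exists>j\<in>J. l j \<noteq> 0) \<and> (\<Sum>j\<in>J. lsmult (l j) (w j)) = 0)"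

lemma ldependent_pivot:
  assumes K: "sub_division_ring K" and J: "finite J" "p \<in> J" and d: "\<And>j. j \<in> J \<Longrightarrow> d j \<in> K"
    and dep: "ldependent K (\<lambda>j. w j - lsmult (d j) (w p)) (J - {p})"
  shows "ldependent K w J"
proof -
  obtain l where l: "\<forall>j\<in>J - {p}. l j \<in> K" "\<exists>j\<in>J - {p}. l j \<noteq> 0"
    and rel: "(\<Sum>j\<in>J - {p}. lsmult (l j) (w j - lsmult (d j) (w p))) = 0"
    using dep unfolding ldependent_def by blast
  define l' where "l' = l(p := - (\<Sum>j\<in>J - {p}. l j * d j))"
  have "(\<Sum>j\<in>J. lsmult (l' j) (w j)) = lsmult (l' p) (w p) + (\<Sum>j\<in>J - {p}. lsmult (l j) (w j))"
    unfolding sum.remove[OF J] by (simp add: l'_def)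
  also have "\<dots> = (\<Sum>j\<in>J - {p}. lsmult (l j) (w j - lsmult (d j) (w p)))"
    by (simp add: l'_def lsmult_uminus_left lsmult_sum_left lsmult_diff_right lsmult_lsmult
        sum_subtractf)
  finally have "(\<Sum>j\<in>J. lsmult (l' j) (w j)) = 0"
    using rel by simp
  moreover have "\<forall>j\<in>J. l' j \<in> K"
    using l(1) d K unfolding l'_def
    by (auto intro!: sub_division_ring_uminus sub_division_ring_sum sub_division_ring_mult)
  moreover have "\<exists>j\<in>J. l' j \<noteq> 0"
    using l(2) by (auto simp: l'_def)
  ultimately show ?thesis
    unfolding ldependent_def by blast
qed

lemma lspan_eliminate:
  assumes K: "sub_division_ring K" and "a' \<noteq> 0" "a \<in> K" "a' \<in> K"
    and "r \<in> lspan K v I" "r' \<in> lspan K v I"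
  shows "(lsmult a u + r) - lsmult (a * inverse a') (lsmult a' u + r') \<in> lspan K v I"
proof -
  have eq: "(lsmult a u + r) - lsmult (a * inverse a') (lsmult a' u + r') =
      r - lsmult (a * inverse a') r'"
    using assms(2) by (simp add: lsmult_add_right lsmult_lsmult mult.assoc)
  have "a * inverse a' \<in> K"
    using K assms(3,4) sub_division_ring_mult sub_division_ring_inverse by blast
  then show ?thesis
    unfolding eq by (rule lspan_diff_lsmult[OF K assms(5,6)])
qed

text \<open>Steinitz exchange: the induction on \<open>I\<close> eliminates the coordinate \<open>i0\<close> using a pivot
  \<open>w p\<close> whose \<open>i0\<close>-coefficient is nonzero.\<close>
lemma lspan_ldependent_biggerset:
  assumes K: "sub_division_ring K" and "finite I" "finite J" "card I < card J"
    and "\<And>j. j \<in> J \<Longrightarrow> w j \<in> lspan K v I"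
  shows "ldependent K w J"
  using assms(2-)
proof (induction I arbitrary: J w rule: finite_induct)
  case empty
  then have "J \<noteq> {}" and "\<And>j. j \<in> J \<Longrightarrow> w j = 0"
    by (auto simp: lspan_def)
  then show ?case
    using sub_division_ring_one[OF K] unfolding ldependent_def
    by (intro exI[of _ "\<lambda>_. 1"]) auto
next
  case (insert i0 I)
  obtain a r where decomp:
      "\<forall>j\<in>J. a j \<in> K \<and> r j \<in> lspan K v I \<and> w j = lsmult (a j) (v i0) + r j"
    using lspan_insert[OF insert.hyps, of J w] insert.prems(3) by blast
  then have a: "a j \<in> K" and r: "r j \<in> lspan K v I" and w: "w j = lsmult (a j) (v i0) + r j"
    if "j \<in> J" for j
    using that by blast+
  have card: "card I < card J - 1"
    using insert.prems(2) insert.hyps by simp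
  show ?case
  proof (cases "\<forall>j\<in>J. a j = 0")
    case True
    then have "w j \<in> lspan K v I" if "j \<in> J" for j
      using w r that by simp
    then show ?thesis
      using insert.IH[OF insert.prems(1)] card by simp
  next
    case False
    then obtain p where p: "p \<in> J" "a p \<noteq> 0" by blast
    define d where "d j = a j * inverse (a p)" for j
    have d: "d j \<in> K" if "j \<in> J" for j
      unfolding d_def using K a that p(1) sub_division_ring_mult sub_division_ring_inverse by blast
    have "w j - lsmult (d j) (w p) \<in> lspan K v I" if "j \<in> J - {p}" for j
    proof -
      from that have j: "j \<in> J" by simp
      from lspan_eliminate[OF K p(2) a[OF j] a[OF p(1)] r[OF j] r[OF p(1)], of "v i0"]
      show ?thesis by (simp only: w[OF j, symmetric] w[OF p(1), symmetric] d_def)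
    qed
    moreover have "finite (J - {p})" "card I < card (J - {p})"
      using insert.prems(1) card p(1) by simp_all
    ultimately have "ldependent K (\<lambda>j. w j - lsmult (d j) (w p)) (J - {p})"
      using insert.IH[of "J - {p}" "\<lambda>j. w j - lsmult (d j) (w p)"] by blast
    then show ?thesis
      using ldependent_pivot[OF K insert.prems(1) p(1), of d w] d by blast
  qed
qed

definition left_linear :: "('a::division_ring poly \<Rightarrow> 'a poly) \<Rightarrow> bool" where
  "left_linear R \<longleftrightarrow> (\<forall>c x y. R (lsmult c x + y) = lsmult c (R x) + R y)"

lemma left_linearD: "left_linear R \<Longrightarrow> R (lsmult c x + y) = lsmult c (R x) + R y"
  unfolding left_linear_def by blast

lemma left_linear_comp: "left_linear R \<Longrightarrow> left_linear S \<Longrightarrow> left_linear (\<lambda>x. R (S x))"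
  unfolding left_linear_def by simp

lemma left_linear_zero: "left_linear R \<Longrightarrow> R 0 = 0"
  using left_linearD[of R 1 0 0] by simp

lemma left_linear_lsmult: "left_linear R \<Longrightarrow> R (lsmult c x) = lsmult c (R x)"
  using left_linearD[of R c x 0] by (simp add: left_linear_zero)

lemma left_linear_diff: "left_linear R \<Longrightarrow> R (x - y) = R x - R y"
  using left_linearD[of R "- 1" y x] by (simp add: lsmult_uminus_left)

lemma left_linear_sum:
  "left_linear R \<Longrightarrow> R (\<Sum>i\<in>A. lsmult (c i) (v i)) = (\<Sum>i\<in>A. lsmult (c i) (R (v i)))"
  by (induction A rule: infinite_finite_induct) (auto simp: left_linear_zero left_linearD)

lemma sum_lsmult_monom_eq_poly:
  assumes "degree p < m"
  shows "(\<Sum>i<m. lsmult (coeff p i) (monom 1 i)) = p"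
proof (rule poly_eqI)
  fix n
  show "coeff (\<Sum>i<m. lsmult (coeff p i) (monom 1 i)) n = coeff p n"
    using assms by (cases "n < m") (auto simp: coeff_sum coeff_monom coeff_eq_0 sum_eq_single[of _ n])
qed

lemma coeff_sum_lsmult_monom:
  "coeff (\<Sum>i<m. lsmult (l i) (monom 1 i)) n = (if n < m then l n else 0)"
  by (auto simp: coeff_sum coeff_monom sum_eq_single[of _ n])

lemma degree_sum_lsmult_monom:
  "0 < m \<Longrightarrow> degree (\<Sum>i<m. lsmult (l i) (monom 1 i)) < m"
  by (rule le_less_trans[OF degree_le[of "m - 1"]]) (auto simp: coeff_sum_lsmult_monom)

text \<open>The images of the \<open>m\<close> monomials together with \<open>y\<close> are \<open>m + 1\<close> vectors in an
  \<open>m\<close>-dimensional space; by injectivity, \<open>y\<close> occurs in the resulting linear relation.\<close>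
lemma left_linear_surj_if_kernel_trivial:
  fixes R :: "'a::division_ring poly \<Rightarrow> 'a poly"
  assumes R: "left_linear R"
    and closed: "\<And>x. degree x < m \<Longrightarrow> degree (R x) < m"
    and kernel: "\<And>x. degree x < m \<Longrightarrow> R x = 0 \<Longrightarrow> x = 0"
    and y: "degree y < m"
  shows "y \<in> R ` {x. degree x < m}"
proof -
  define w where "w j = (if j < m then R (monom 1 j) else y)" for j
  have "w j \<in> lspan UNIV (monom 1) {..<m}" for j
  proof -
    have "degree (w j) < m"
      using y by (auto simp: w_def intro!: closed le_less_trans[OF degree_monom_le])
    then show ?thesis
      using lspan_sum_lsmult[of "{..<m}" "\<lambda>i. coeff (w j) i" UNIV "monom 1"]
      by (simp add: sum_lsmult_monom_eq_poly)
  qed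
  then have "ldependent UNIV w {..m}"
    by (intro lspan_ldependent_biggerset[OF sub_division_ring_UNIV, where I="{..<m}"]) auto
  then obtain l where l: "\<exists>j\<le>m. l j \<noteq> 0" and rel: "(\<Sum>j\<le>m. lsmult (l j) (w j)) = 0"
    unfolding ldependent_def by auto
  define X where "X = (\<Sum>i<m. lsmult (l i) (monom 1 i))"
  have dX: "degree X < m"
    using y by (simp add: X_def degree_sum_lsmult_monom)
  have "(\<Sum>j\<le>m. lsmult (l j) (w j)) = lsmult (l m) y + R X"
    by (simp add: lessThan_Suc_atMost[symmetric] w_def X_def left_linear_sum[OF R])
  then have RX: "R X = - lsmult (l m) y"
    using rel by (simp add: eq_neg_iff_add_eq_0 add.commute)
  show ?thesis
  proof (cases "l m = 0")
    case True
    then have "X = 0" using kernel[OF dX] RX by simp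
    then have "l j = 0" if "j < m" for j
      using coeff_sum_lsmult_monom[of l m j] that by (simp add: X_def)
    with True l show ?thesis by (metis le_neq_implies_less)
  next
    case False
    have "R (lsmult (- inverse (l m)) X) = y"
      unfolding left_linear_lsmult[OF R] RX using False
      by (simp add: lsmult_uminus_right lsmult_uminus_left lsmult_lsmult)
    moreover have "degree (lsmult (- inverse (l m)) X) < m"
      using dX degree_lsmult_le le_less_trans by blast
    ultimately show ?thesis by blast
  qed
qed

lemma left_linear_bij_betw_if_kernel_trivial:
  fixes R :: "'a::division_ring poly \<Rightarrow> 'a poly"
  assumes R: "left_linear R"
    and closed: "\<And>x. degree x < m \<Longrightarrow> degree (R x) < m"
    and kernel: "\<And>x. degree x < m \<Longrightarrow> R x = 0 \<Longrightarrow> x = 0"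
  shows "bij_betw R {x. degree x < m} {x. degree x < m}"
proof (rule bij_betw_imageI)
  show "inj_on R {x. degree x < m}"
  proof (rule inj_onI)
    fix x y
    assume "x \<in> {x. degree x < m}" "y \<in> {x. degree x < m}" "R x = R y"
    then have "degree (x - y) < m" "R (x - y) = 0"
      using degree_diff_le_max[of x y] by (auto simp: left_linear_diff[OF R])
    then show "x = y" using kernel[of "x - y"] by simp
  qed
  show "R ` {x. degree x < m} = {x. degree x < m}"
    using closed left_linear_surj_if_kernel_trivial[OF R closed kernel] by blast
qed

section \<open>Skew polynomials\<close>

locale skew_poly =
  fixes \<sigma> :: "'a::division_ring \<Rightarrow> 'a"
  assumes endo: "ring_endo \<sigma>"
begin

abbreviation skew_times :: "'a poly \<Rightarrow> 'a poly \<Rightarrow> 'a poly"  (infixl \<open>\<star>\<close> 70)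
  where "p \<star> q \<equiv> skew_mult \<sigma> p q"

lemma endo_pow: "ring_endo (\<sigma> ^^ n)"
  by (rule ring_endo_funpow[OF endo])

lemma coeff_skew_mult: "coeff (p \<star> q) k = (\<Sum>i\<le>k. coeff p i * (\<sigma> ^^ i) (coeff q (k - i)))"
proof (cases "k < degree p + degree q + 1")
  case True
  then show ?thesis unfolding skew_mult_def by (simp add: nth_default_def del: upt_Suc)
next
  case False
  have "coeff p i * (\<sigma> ^^ i) (coeff q (k - i)) = 0" for i
    using False by (cases "i \<le> degree p") (auto simp: coeff_eq_0 ring_endo_zero[OF endo_pow])
  then have "(\<Sum>i\<le>k. coeff p i * (\<sigma> ^^ i) (coeff q (k - i))) = 0"
    by (simp only: sum.neutral_const)
  with False show ?thesis unfolding skew_mult_def by (simp add: nth_default_def)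
qed

lemma skew_mult_0_left [simp]: "0 \<star> q = 0"
  and skew_mult_0_right [simp]: "p \<star> 0 = 0"
  by (rule poly_eqI, simp add: coeff_skew_mult ring_endo_zero[OF endo_pow])+

lemma skew_mult_add_left: "(p + p') \<star> q = p \<star> q + p' \<star> q"
  by (rule poly_eqI) (simp add: coeff_skew_mult distrib_right sum.distrib)

lemma skew_mult_add_right: "p \<star> (q + q') = p \<star> q + p \<star> q'"
  by (rule poly_eqI) (simp add: coeff_skew_mult distrib_left sum.distrib ring_endo_add[OF endo_pow])

lemma skew_mult_diff_left: "(p - p') \<star> q = p \<star> q - p' \<star> q"
  by (rule poly_eqI) (simp add: coeff_skew_mult left_diff_distrib sum_subtractf)

lemma skew_mult_lsmult_left: "lsmult c p \<star> q = lsmult c (p \<star> q)"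
  by (rule poly_eqI) (simp add: coeff_skew_mult sum_distrib_left mult.assoc)

lemma skew_mult_const_left: "[:c:] \<star> p = lsmult c p"
proof (rule poly_eqI)
  fix n
  have "(\<Sum>i\<le>n. coeff [:c:] i * (\<sigma> ^^ i) (coeff p (n - i))) = c * coeff p n"
    by (subst sum_eq_single[of _ 0]) (auto simp: coeff_pCons split: nat.splits)
  then show "coeff ([:c:] \<star> p) n = coeff (lsmult c p) n"
    by (simp add: coeff_skew_mult)
qed

lemma coeff_skew_mult_above:
  assumes "degree p + degree q < k"
  shows "coeff (p \<star> q) k = 0"
proof -
  have "coeff p i * (\<sigma> ^^ i) (coeff q (k - i)) = 0" for i
    using assms by (cases "i \<le> degree p") (auto simp: coeff_eq_0 ring_endo_zero[OF endo_pow])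
  then show ?thesis unfolding coeff_skew_mult by (simp only: sum.neutral_const)
qed

lemma degree_skew_mult_le: "degree (p \<star> q) \<le> degree p + degree q"
  by (rule degree_le) (auto intro: coeff_skew_mult_above)

lemma coeff_skew_mult_degree:
  "coeff (p \<star> q) (degree p + degree q) = lead_coeff p * (\<sigma> ^^ degree p) (lead_coeff q)"
proof -
  let ?k = "degree p + degree q"
  have "coeff p i * (\<sigma> ^^ i) (coeff q (?k - i)) = 0" if "i \<noteq> degree p" for i
    using that by (cases "i < degree p") (auto simp: coeff_eq_0 ring_endo_zero[OF endo_pow])
  then show ?thesis
    by (simp add: coeff_skew_mult sum_eq_single[of _ "degree p"])
qed

lemma lead_coeff_skew_mult_nonzero:
  assumes "p \<noteq> 0" "q \<noteq> 0"
  shows "coeff (p \<star> q) (degree p + degree q) \<noteq> 0"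
  using assms by (simp add: coeff_skew_mult_degree ring_endo_eq_0_iff[OF endo_pow])

lemma degree_skew_mult:
  assumes "p \<noteq> 0" "q \<noteq> 0"
  shows "degree (p \<star> q) = degree p + degree q"
  using degree_skew_mult_le[of p q] le_degree[OF lead_coeff_skew_mult_nonzero[OF assms]]
  by linarith

lemma skew_mult_eq_0_iff: "p \<star> q = 0 \<longleftrightarrow> p = 0 \<or> q = 0"
  using lead_coeff_skew_mult_nonzero by fastforce

lemma skew_mult_assoc: "(p \<star> q) \<star> r = p \<star> (q \<star> r)"
proof (rule poly_eqI)
  fix k
  define G where
    "G i j = coeff p i * (\<sigma> ^^ i) (coeff q j) * (\<sigma> ^^ (i + j)) (coeff r (k - i - j))" for i j
  have "coeff ((p \<star> q) \<star> r) k = (\<Sum>s\<le>k. \<Sum>i\<le>s. G i (s - i))"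
    by (auto simp: coeff_skew_mult sum_distrib_right G_def intro!: sum.cong)
  also have "\<dots> = (\<Sum>(i, j)\<in>{(i, j). i + j \<le> k}. G i j)"
    by (rule sum.triangle_reindex_eq[symmetric])
  also have "{(i, j). i + j \<le> k} = Sigma {..k} (\<lambda>i. {..k - i})"
    by auto
  also have "(\<Sum>(i, j)\<in>Sigma {..k} (\<lambda>i. {..k - i}). G i j) = (\<Sum>i\<le>k. \<Sum>j\<le>k - i. G i j)"
    by (rule sum.Sigma[symmetric]) auto
  also have "\<dots> = coeff (p \<star> (q \<star> r)) k"
    by (auto simp: coeff_skew_mult G_def sum_distrib_left ring_endo_sum[OF endo_pow]
        ring_endo_mult[OF endo_pow] funpow_add mult.assoc intro!: sum.cong)
  finally show "coeff ((p \<star> q) \<star> r) k = coeff (p \<star> (q \<star> r)) k" .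
qed

lemma left_linear_skew_mult_left: "left_linear (\<lambda>x. x \<star> a)"
  by (simp add: left_linear_def skew_mult_add_left skew_mult_lsmult_left)

lemma coeff_t_skew_mult: "coeff (monom 1 1 \<star> x) k = (if k = 0 then 0 else \<sigma> (coeff x (k - 1)))"
proof (cases k)
  case (Suc j)
  have "(\<Sum>i\<le>k. coeff (monom 1 1) i * (\<sigma> ^^ i) (coeff x (k - i))) = \<sigma> (coeff x (k - 1))"
    by (subst sum_eq_single[of _ 1]) (use Suc in auto)
  then show ?thesis using Suc by (simp add: coeff_skew_mult)
qed (simp add: coeff_skew_mult)

lemma skew_mult_t_right: "g \<star> monom 1 1 = pCons 0 g"
proof (rule poly_eqI)
  fix k
  show "coeff (g \<star> monom 1 1) k = coeff (pCons 0 g) k"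
  proof (cases k)
    case (Suc j)
    have "(\<Sum>i\<le>k. coeff g i * (\<sigma> ^^ i) (coeff (monom 1 1) (k - i))) = coeff g j"
      by (subst sum_eq_single[of _ j])
        (use Suc in \<open>auto simp: ring_endo_zero[OF endo_pow] ring_endo_one[OF endo_pow]\<close>)
    then show ?thesis using Suc by (simp add: coeff_skew_mult)
  qed (simp add: coeff_skew_mult ring_endo_zero[OF endo_pow])
qed

lemma skew_mult_cancel_lead:
  assumes h: "h \<noteq> 0" and g: "g \<noteq> 0" and deg: "degree h \<le> degree g"
  obtains M where "g - M \<star> h = 0 \<or> degree (g - M \<star> h) < degree g"
proof -
  define n where "n = degree g - degree h"
  define M where "M = monom (lead_coeff g * inverse ((\<sigma> ^^ n) (lead_coeff h))) n"
  have lead_h: "(\<sigma> ^^ n) (lead_coeff h) \<noteq> 0"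
    using h by (simp add: ring_endo_eq_0_iff[OF endo_pow])
  then have M: "M \<noteq> 0" "degree M = n"
    using g by (simp_all add: M_def degree_monom_eq)
  have "degree (M \<star> h) = degree g"
    using degree_skew_mult[OF M(1) h] M(2) deg by (simp add: n_def)
  moreover have "coeff (M \<star> h) (degree g) = lead_coeff g"
    using coeff_skew_mult_degree[of M h] M(2) deg lead_h by (simp add: M_def n_def mult.assoc)
  ultimately have "coeff (g - M \<star> h) k = 0" if "degree g \<le> k" for k
    using that by (cases "k = degree g") (simp_all add: coeff_eq_0)
  then have "g - M \<star> h = 0 \<or> degree (g - M \<star> h) < degree g"
    using leading_coeff_neq_0 not_less by blast
  with that show ?thesis by blast
qed

lemma skew_right_division:
  assumes h: "h \<noteq> 0"
  shows "\<exists>q r. g = q \<star> h + r \<and> (r = 0 \<or> degree r < degree h)"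
proof (induction "degree g" arbitrary: g rule: less_induct)
  case less
  show ?case
  proof (cases "g = 0 \<or> degree g < degree h")
    case True
    then show ?thesis by (intro exI[of _ 0] exI[of _ g]) auto
  next
    case False
    then obtain M where M: "g - M \<star> h = 0 \<or> degree (g - M \<star> h) < degree g"
      using skew_mult_cancel_lead[OF h] by (meson not_less)
    have "\<exists>q r. g - M \<star> h = q \<star> h + r \<and> (r = 0 \<or> degree r < degree h)"
      using M
    proof
      assume "g - M \<star> h = 0"
      then show ?thesis by (intro exI[of _ 0]) simp
    qed (rule less)
    then obtain q r where "g - M \<star> h = q \<star> h + r" "r = 0 \<or> degree r < degree h"
      by blast
    then have "g = (M + q) \<star> h + r" "r = 0 \<or> degree r < degree h"
      by (simp_all add: skew_mult_add_left algebra_simps)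
    then show ?thesis by blast
  qed
qed

text \<open>The left Ore condition, along the Euclidean algorithm: if \<open>u = s x + r\<close> and
  \<open>y x = z r\<close> for the smaller divisor \<open>r\<close>, then \<open>z u = (z s + y) x\<close>.\<close>
lemma skew_left_ore:
  assumes "x \<noteq> 0" "u \<noteq> 0"
  shows "\<exists>y z. y \<noteq> 0 \<and> y \<star> u = z \<star> x \<and> degree y \<le> degree x"
  using assms
proof (induction "degree x" arbitrary: x u rule: less_induct)
  case less
  obtain s r where sr: "u = s \<star> x + r" "r = 0 \<or> degree r < degree x"
    using skew_right_division[OF less.prems(1)] by blast
  show ?case
  proof (cases "r = 0")
    case True
    then have "[:1:] \<star> u = s \<star> x"
      using sr by (simp add: skew_mult_const_left)
    then show ?thesis by (intro exI[of _ "[:1:]"] exI[of _ s]) auto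
  next
    case False
    then have dr: "degree r < degree x" using sr by auto
    obtain y z where yz: "y \<noteq> 0" "y \<star> x = z \<star> r" "degree y \<le> degree r"
      using less.hyps[OF dr False less.prems(1)] by blast
    have "z \<star> u = (z \<star> s + y) \<star> x"
      using sr(1) yz(2) by (simp add: skew_mult_add_right skew_mult_add_left skew_mult_assoc)
    moreover have z: "z \<noteq> 0"
      using yz(1,2) less.prems(1) by (auto simp: skew_mult_eq_0_iff)
    moreover have "degree z + degree r = degree y + degree x"
      using degree_skew_mult[OF z False] degree_skew_mult[OF yz(1) less.prems(1)] yz(2) by simp
    then have "degree z \<le> degree x" using yz(3) by linarith
    ultimately show ?thesis by blast
  qed
qed

lemma sub_division_ring_fixed_points: "sub_division_ring {c. \<sigma> c = c}"
  by (simp add: sub_division_ring_def ring_endo_one[OF endo] ring_endo_diff[OF endo]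
      ring_endo_mult[OF endo] ring_endo_inverse[OF endo])

text \<open>If \<open>l\<^sub>j\<^sub>0\<close> is the first nonzero coefficient, the relation reads
  \<open>\<sigma>\<^sup>j\<^sup>0 (l\<^sub>j\<^sub>0 y + \<sigma> Z) = 0\<close>, so \<open>y = \<sigma> (- l\<^sub>j\<^sub>0\<inverse> Z)\<close>.\<close>
lemma in_range_if_fixed_relation:
  assumes fixed: "\<forall>j\<le>k. \<sigma> (l j) = l j" and nz: "\<exists>j\<le>k. l j \<noteq> 0"
    and rel: "(\<Sum>j\<le>k. l j * (\<sigma> ^^ j) y) = 0"
  shows "y \<in> range \<sigma>"
proof -
  have fixed_pow: "(\<sigma> ^^ n) (l j) = l j" if "j \<le> k" for n j
    by (induction n) (use fixed that in auto)
  define j0 where "j0 = (LEAST j. j \<le> k \<and> l j \<noteq> 0)"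
  have j0: "j0 \<le> k" "l j0 \<noteq> 0"
    using LeastI_ex[of "\<lambda>j. j \<le> k \<and> l j \<noteq> 0"] nz by (auto simp: j0_def)
  have below: "l j = 0" if "j < j0" for j
    using not_less_Least[of j "\<lambda>j. j \<le> k \<and> l j \<noteq> 0"] that j0(1) unfolding j0_def by auto
  define Z where "Z = (\<Sum>j\<in>{j0<..k}. l j * (\<sigma> ^^ (j - Suc j0)) y)"
  have pow: "(\<sigma> ^^ a) (\<sigma> ((\<sigma> ^^ b) y)) = (\<sigma> ^^ (a + Suc b)) y" for a b
    by (simp only: funpow_add comp_apply funpow.simps)
  have "(\<sigma> ^^ j0) (l j0 * y + \<sigma> Z) = (\<Sum>j\<in>insert j0 {j0<..k}. l j * (\<sigma> ^^ j) y)"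
    unfolding Z_def
    by (simp add: ring_endo_sum[OF endo] ring_endo_sum[OF endo_pow] ring_endo_mult[OF endo]
        ring_endo_mult[OF endo_pow] ring_endo_add[OF endo_pow] fixed fixed_pow pow j0)
  also have "\<dots> = (\<Sum>j\<le>k. l j * (\<sigma> ^^ j) y)"
    by (rule sum.mono_neutral_left) (use j0 below in \<open>auto simp: not_less\<close>)
  finally have "l j0 * y + \<sigma> Z = 0"
    using rel by (simp add: ring_endo_eq_0_iff[OF endo_pow])
  then have "l j0 * y = - \<sigma> Z"
    by (simp add: eq_neg_iff_add_eq_0)
  have "y = inverse (l j0) * (l j0 * y)"
    using j0(2) by (simp add: mult.assoc[symmetric])
  also have "\<dots> = - inverse (l j0) * \<sigma> Z"
    using \<open>l j0 * y = - \<sigma> Z\<close> by simp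
  also have "\<dots> = \<sigma> (- inverse (l j0) * Z)"
    using j0 fixed
    by (simp add: ring_endo_mult[OF endo] ring_endo_uminus[OF endo] ring_endo_inverse[OF endo])
  finally show ?thesis by blast
qed

end

section \<open>The algebra \<open>S\<^sub>f\<close>\<close>

locale skew_quotient = skew_poly +
  fixes f :: "'a poly"
  assumes degree_f_pos: "0 < degree f"
begin

abbreviation rem :: "'a poly \<Rightarrow> 'a poly" where
  "rem g \<equiv> skew_rmod \<sigma> g f"

lemma f_nonzero: "f \<noteq> 0"
  using degree_f_pos by auto

lemma skew_rmod_eqI:
  assumes g: "g = q \<star> f + r" and r: "degree r < degree f"
  shows "rem g = r"
  unfolding skew_rmod_def
proof (rule the_equality)
  show "degree r < degree f \<and> (\<exists>q. g = q \<star> f + r)"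
    using assms by blast
next
  fix r'
  assume "degree r' < degree f \<and> (\<exists>q. g = q \<star> f + r')"
  then obtain q' where r': "degree r' < degree f" "g = q' \<star> f + r'"
    by blast
  have diff: "(q - q') \<star> f = r' - r"
    using g r'(2) by (simp add: skew_mult_diff_left algebra_simps)
  have "degree (r' - r) < degree f"
    using degree_diff_le_max[of r' r] r'(1) r by linarith
  then have "q - q' = 0"
    using degree_skew_mult[OF _ f_nonzero, of "q - q'"] diff by fastforce
  then show "r' = r"
    using diff by simp
qed

lemma skew_rmod:
  obtains q where "g = q \<star> f + rem g" "degree (rem g) < degree f"
proof -
  obtain q r where qr: "g = q \<star> f + r" "r = 0 \<or> degree r < degree f"
    using skew_right_division[OF f_nonzero] by blast
  have r: "degree r < degree f"
    using qr(2) degree_f_pos by auto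
  have "rem g = r"
    using qr(1) r by (rule skew_rmod_eqI)
  with qr(1) r show ?thesis
    using that by simp
qed

lemma degree_skew_rmod: "degree (rem g) < degree f"
  by (rule skew_rmod)

lemma skew_rmod_small: "degree g < degree f \<Longrightarrow> rem g = g"
  by (rule skew_rmod_eqI[of _ 0]) simp_all

lemma skew_rmod_eq_0_iff: "rem g = 0 \<longleftrightarrow> (\<exists>q. g = q \<star> f)"
proof
  assume "rem g = 0"
  moreover obtain q where "g = q \<star> f + rem g"
    by (rule skew_rmod)
  ultimately show "\<exists>q. g = q \<star> f"
    by auto
next
  assume "\<exists>q. g = q \<star> f"
  then obtain q where "g = q \<star> f + 0"
    by auto
  then show "rem g = 0"
    by (rule skew_rmod_eqI) (use degree_f_pos in simp)
qed

lemma left_linear_skew_rmod: "left_linear rem"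
  unfolding left_linear_def
proof (intro allI)
  fix c g h
  obtain q q' where q: "g = q \<star> f + rem g" and q': "h = q' \<star> f + rem h"
    using skew_rmod by metis
  have "lsmult c g + h = (lsmult c q + q') \<star> f + (lsmult c (rem g) + rem h)"
    by (subst q, subst q') (simp add: skew_mult_add_left skew_mult_lsmult_left lsmult_add_right
        algebra_simps)
  moreover have "degree (lsmult c (rem g) + rem h) < degree f"
    using degree_add_le_max[of "lsmult c (rem g)" "rem h"] degree_lsmult_le[of c "rem g"]
      degree_skew_rmod[of g] degree_skew_rmod[of h] by linarith
  ultimately show "rem (lsmult c g + h) = lsmult c (rem g) + rem h"
    by (rule skew_rmod_eqI)
qed

lemma left_linear_Sf_mult_left: "left_linear (\<lambda>x. Sf_mult \<sigma> f x a)"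
  unfolding Sf_mult_def by (rule left_linear_comp[OF left_linear_skew_rmod left_linear_skew_mult_left])

lemma degree_Sf_mult: "degree (Sf_mult \<sigma> f x a) < degree f"
  unfolding Sf_mult_def by (rule degree_skew_rmod)

lemma Sf_mult_eq_0_iff: "Sf_mult \<sigma> f x a = 0 \<longleftrightarrow> (\<exists>q. x \<star> a = q \<star> f)"
  unfolding Sf_mult_def by (rule skew_rmod_eq_0_iff)

lemma Sf_mult_const_left: "degree b < degree f \<Longrightarrow> Sf_mult \<sigma> f [:c:] b = lsmult c b"
  unfolding Sf_mult_def skew_mult_const_left
  by (rule skew_rmod_small) (use degree_lsmult_le le_less_trans in blast)

lemma degree_pos_if_skew_mult_eq:
  assumes "a \<noteq> 0" "x \<noteq> 0" "degree x < degree f" "x \<star> a = q \<star> f"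
  shows "0 < degree a"
proof -
  have "q \<noteq> 0"
    using assms by (auto simp: skew_mult_eq_0_iff)
  then have "degree x + degree a = degree q + degree f"
    using assms(4) degree_skew_mult[OF assms(2,1)] degree_skew_mult[OF _ f_nonzero] by simp
  with assms(3) show ?thesis by linarith
qed

end

locale skew_irreducible_quotient = skew_quotient +
  assumes no_small_factorization:
    "\<nexists>g h. degree g < degree f \<and> degree h < degree f \<and> f = g \<star> h"
begin

lemma no_proper_right_divisor:
  assumes "0 < degree a" "degree a < degree f"
  shows "f \<noteq> u \<star> a"
proof
  assume f: "f = u \<star> a"
  then have "u \<noteq> 0" "a \<noteq> 0"
    using f_nonzero by auto
  then have "degree u < degree f"
    using f degree_skew_mult assms(1) by simp
  with f assms(2) show False
    using no_small_factorization by blast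
qed

text \<open>Descent along the Euclidean algorithm for \<open>a\<close> and \<open>f\<close>: if \<open>f = u a + r\<close> with \<open>r \<noteq> 0\<close>,
  the left Ore condition gives \<open>y u = z x\<close>, and then \<open>y r = (y - z q) f\<close> is a counterexample
  with \<open>deg r < deg a\<close>. When \<open>r = 0\<close>, \<open>f = u a\<close> is a forbidden factorization.\<close>
lemma skew_mult_not_in_left_ideal:
  assumes "a \<noteq> 0" "degree a < degree f" "x \<noteq> 0" "degree x < degree f"
  shows "x \<star> a \<noteq> q \<star> f"
  using assms
proof (induction "degree a" arbitrary: a x q rule: less_induct)
  case less
  show ?case
  proof
    assume eq: "x \<star> a = q \<star> f"
    obtain u r where ur: "f = u \<star> a + r" "r = 0 \<or> degree r < degree a"
      using skew_right_division[OF less.prems(1)] by blast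
    have u: "u \<noteq> 0"
      using ur less.prems(2) f_nonzero by auto
    show False
    proof (cases "r = 0")
      case True
      then show False
        using ur(1) no_proper_right_divisor[OF _ less.prems(2)]
          degree_pos_if_skew_mult_eq[OF less.prems(1,3,4) eq] by simp
    next
      case False
      then have dr: "degree r < degree a"
        using ur(2) by simp
      obtain y z where yz: "y \<noteq> 0" "y \<star> u = z \<star> x" "degree y \<le> degree x"
        using skew_left_ore[OF less.prems(3) u] by blast
      have "y \<star> r = y \<star> f - (y \<star> u) \<star> a"
        using ur(1) by (simp add: skew_mult_add_right skew_mult_assoc)
      also have "\<dots> = (y - z \<star> q) \<star> f"
        using yz(2) eq by (simp add: skew_mult_assoc skew_mult_diff_left)
      finally have "y \<star> r = (y - z \<star> q) \<star> f" .
      moreover have "degree r < degree f" "degree y < degree f"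
        using dr less.prems(2,4) yz(3) by linarith+
      then have "y \<star> r \<noteq> (y - z \<star> q) \<star> f"
        by (rule less.hyps[OF dr False _ yz(1)])
      ultimately show False by contradiction
    qed
  qed
qed

lemma Sf_no_zero_divisors: "Sf_no_zero_divisors \<sigma> f"
  unfolding Sf_no_zero_divisors_def Sf_def Sf_mult_eq_0_iff
  using skew_mult_not_in_left_ideal by blast

lemma Sf_right_division: "Sf_right_division \<sigma> f"
  unfolding Sf_right_division_def
proof (intro ballI impI)
  fix a
  assume "a \<in> Sf f" "a \<noteq> 0"
  then have "x = 0" if "degree x < degree f" "Sf_mult \<sigma> f x a = 0" for x
    using Sf_no_zero_divisors that unfolding Sf_no_zero_divisors_def Sf_def by blast
  then show "bij_betw (\<lambda>x. Sf_mult \<sigma> f x a) (Sf f) (Sf f)"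
    unfolding Sf_def
    by (rule left_linear_bij_betw_if_kernel_trivial[OF left_linear_Sf_mult_left degree_Sf_mult])
qed

lemma coeff_0_nonzero:
  assumes "2 \<le> degree f"
  shows "coeff f 0 \<noteq> 0"
proof
  assume "coeff f 0 = 0"
  then obtain g where g: "f = pCons 0 g"
    by (metis pCons_cases coeff_pCons_0)
  then have "f = g \<star> monom 1 1" "degree g < degree f"
    using f_nonzero skew_mult_t_right[of g] by simp_all
  moreover have "degree (monom (1::'a) 1) < degree f"
    using assms by (simp add: degree_monom_eq)
  ultimately show False
    using no_small_factorization by blast
qed

end

context skew_quotient
begin

lemma skew_rmod_t_skew_mult:
  assumes f0: "coeff f 0 \<noteq> 0" and x: "degree x < degree f"
    and rem0: "coeff (rem (monom 1 1 \<star> x)) 0 = 0"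
  shows "rem (monom 1 1 \<star> x) = monom 1 1 \<star> x"
proof -
  let ?p = "monom 1 1 \<star> x"
  obtain q where q: "?p = q \<star> f + rem ?p"
    by (rule skew_rmod)
  have "degree q = 0"
  proof (rule ccontr)
    assume "degree q \<noteq> 0"
    then have "degree (q \<star> f) = degree q + degree f"
      by (intro degree_skew_mult f_nonzero) auto
    moreover have "degree ?p \<le> degree f"
      using degree_skew_mult_le[of "monom 1 1" x] x by (simp add: degree_monom_eq)
    moreover have "q \<star> f = ?p - rem ?p"
      using q by (metis add_diff_cancel_right')
    ultimately have "degree q + degree f \<le> degree f"
      using degree_diff_le_max[of ?p "rem ?p"] degree_skew_rmod[of ?p] by simp
    with \<open>degree q \<noteq> 0\<close> show False by simp
  qed
  then obtain b where b: "q = [:b:]"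
    by (metis degree_0_id)
  have "b * coeff f 0 = 0"
    using arg_cong[OF q, of "\<lambda>p. coeff p 0"] coeff_t_skew_mult[of x 0] rem0
    by (simp add: b skew_mult_const_left)
  with f0 b q show ?thesis by simp
qed

lemma not_Sf_left_division:
  assumes not_surj: "\<not> surj \<sigma>" and deg: "2 \<le> degree f" and f0: "coeff f 0 \<noteq> 0"
  shows "\<not> Sf_left_division \<sigma> f"
proof
  assume left_division: "Sf_left_division \<sigma> f"
  obtain c where c: "c \<notin> range \<sigma>"
    using not_surj by auto
  have t: "monom 1 1 \<in> Sf f" "monom (1::'a) 1 \<noteq> 0"
    using deg by (simp_all add: Sf_def degree_monom_eq)
  have y: "monom c 1 \<in> Sf f"
    using deg degree_monom_le[of c 1] by (simp add: Sf_def)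
  obtain x where x: "x \<in> Sf f" "Sf_mult \<sigma> f (monom 1 1) x = monom c 1"
    using left_division t y unfolding Sf_left_division_def bij_betw_def by (metis imageE)
  then have "coeff (rem (monom 1 1 \<star> x)) 0 = 0"
    by (simp add: Sf_mult_def)
  then have "rem (monom 1 1 \<star> x) = monom 1 1 \<star> x"
    using x(1) by (intro skew_rmod_t_skew_mult[OF f0]) (simp_all add: Sf_def)
  then have "monom 1 1 \<star> x = monom c 1"
    using x(2) by (simp add: Sf_mult_def)
  then have "\<sigma> (coeff x 0) = c"
    using coeff_t_skew_mult[of x 1] by simp
  with c show False by blast
qed

lemma S0_subset_fixed_points:
  assumes "2 \<le> degree f"
  shows "S0 \<sigma> f \<subseteq> {c. \<sigma> c = c}"
proof
  fix c
  assume "c \<in> S0 \<sigma> f"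
  have t: "degree (monom (1::'a) 1) < degree f"
    using assms by (simp add: degree_monom_eq)
  then have "Sf_mult \<sigma> f [:c:] (monom 1 1) = Sf_mult \<sigma> f (monom 1 1) [:c:]"
    using \<open>c \<in> S0 \<sigma> f\<close> unfolding S0_def Sf_def by blast
  moreover have "Sf_mult \<sigma> f [:c:] (monom 1 1) = lsmult c (monom 1 1)"
    using Sf_mult_const_left t by blast
  moreover have "Sf_mult \<sigma> f (monom 1 1) [:c:] = monom 1 1 \<star> [:c:]"
    unfolding Sf_mult_def
    by (rule skew_rmod_small) (use degree_skew_mult_le[of "monom 1 1" "[:c:]"] t in simp)
  ultimately have "coeff (lsmult c (monom 1 1)) 1 = coeff (monom 1 1 \<star> [:c:]) 1"
    by simp
  then show "c \<in> {c. \<sigma> c = c}"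
    using coeff_t_skew_mult[of "[:c:]" 1] by simp
qed

text \<open>Over \<open>S\<^sub>0\<close>, which consists of \<open>\<sigma>\<close>-fixed constants, the constants
  \<open>y, \<sigma> y, \<sigma>\<^sup>2 y, \<dots>\<close> are linearly independent whenever \<open>y \<notin> \<sigma>(D)\<close>.\<close>
lemma not_Sf_finite_dim_over_S0:
  assumes not_surj: "\<not> surj \<sigma>" and deg: "2 \<le> degree f"
  shows "\<not> Sf_finite_dim_over_S0 \<sigma> f"
proof
  let ?F = "{c. \<sigma> c = c}"
  assume "Sf_finite_dim_over_S0 \<sigma> f"
  then obtain B where B: "finite B" "B \<subseteq> Sf f"
    and spans: "\<forall>g\<in>Sf f. \<exists>c. (\<forall>b\<in>B. c b \<in> S0 \<sigma> f) \<and> g = (\<Sum>b\<in>B. Sf_mult \<sigma> f [:c b:] b)"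
    unfolding Sf_finite_dim_over_S0_def by blast
  have lspan: "g \<in> lspan ?F id B" if "g \<in> Sf f" for g
  proof -
    obtain c where c: "\<forall>b\<in>B. c b \<in> S0 \<sigma> f" "g = (\<Sum>b\<in>B. Sf_mult \<sigma> f [:c b:] b)"
      using spans \<open>g \<in> Sf f\<close> by blast
    have "g = (\<Sum>b\<in>B. lsmult (c b) (id b))"
      unfolding c(2) using B(2) by (intro sum.cong) (auto simp: Sf_def Sf_mult_const_left)
    then show ?thesis
      using c(1) S0_subset_fixed_points[OF deg] lspan_sum_lsmult[of B c ?F id] by auto
  qed
  obtain y where y: "y \<notin> range \<sigma>"
    using not_surj by auto
  have "[:(\<sigma> ^^ j) y:] \<in> lspan ?F id B" for j
    using deg by (intro lspan) (simp add: Sf_def)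
  then have "ldependent ?F (\<lambda>j. [:(\<sigma> ^^ j) y:]) {..card B}"
    by (intro lspan_ldependent_biggerset[OF sub_division_ring_fixed_points B(1)]) auto
  then obtain l where l: "\<forall>j\<le>card B. \<sigma> (l j) = l j" "\<exists>j\<le>card B. l j \<noteq> 0"
    and rel: "(\<Sum>j\<le>card B. lsmult (l j) [:(\<sigma> ^^ j) y:]) = 0"
    unfolding ldependent_def by auto
  have "(\<Sum>j\<le>card B. l j * (\<sigma> ^^ j) y) = 0"
    using arg_cong[OF rel, of "\<lambda>p. coeff p 0"] by (simp add: coeff_sum)
  with l have "y \<in> range \<sigma>"
    by (rule in_range_if_fixed_relation)
  with y show False ..
qed

end

theorem mainTheorem8:
  fixes \<sigma> :: "'a::division_ring \<Rightarrow> 'a" and f :: "'a poly"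
  assumes "ring_endo \<sigma>"
    and "\<not> surj \<sigma>"
    and "lead_coeff f = 1"
    and "degree f \<ge> 2"
    and "skew_irreducible \<sigma> f"
  shows "Sf_no_zero_divisors \<sigma> f \<and> Sf_right_division \<sigma> f \<and> \<not> Sf_left_division \<sigma> f
         \<and> \<not> Sf_finite_dim_over_S0 \<sigma> f"
proof -
  interpret skew_irreducible_quotient \<sigma> f
    using assms(1,4,5) by unfold_locales (auto simp: skew_irreducible_def)
  show ?thesis
    using Sf_no_zero_divisors Sf_right_division
      not_Sf_left_division[OF assms(2,4) coeff_0_nonzero[OF assms(4)]]
      not_Sf_finite_dim_over_S0[OF assms(2,4)]
    by blast
qed

end
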